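(* Let $d\ge2$ and $k\in\{1,\dots,d-1\}$. For every $\tau,\varepsilon>0$ there exists $\eta>0$ such that for every $\tau$-admissible $\mathbf r=(r_1,r_2,r_3)\in(0,\infty)^3$, the closed unit ball $\mathbb B_{d-k}\subset\mathbb R^{d-k}$ admits a measurable partition $\mathbb B_{d-k}=\mathcal G\cup\mathcal B$ with $|\mathcal B|<\varepsilon$ such that for every $x_3'\in\mathcal G$, $$\lambda_{x_3'}\Big\{(x_1',x_2')\in\mathbb B_{d-k}^2:\ \textstyle\sum_{j=1}^3r_jx_j'=0\ \text{and}\ (r_j\phi(x_j'))_{1\le j\le3}\ \text{is }\eta\text{-admissible}\Big\}\ge\eta.$$
   Context: $\phi(t)=(1-|t|^2)^{1/2}$ for $|t|\le1$. A triple of positive reals $(s_j)$ is $\tau$-admissible if $s_i+s_j\ge s_k+\tau\max(s_1,s_2,s_3)$ for every permutation $(i,j,k)$ of $(1,2,3)$. For fixed $x_3'$, $\lambda_{x_3'}$ is the measure on $\{(x_1',x_2')\in(\mathbb R^{d-k})^2: r_1x_1'+r_2x_2'+r_3x_3'=0\}$ given by Lebesgue measure of the projection $(x_1',x_2')\mapsto x_1'$. *)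

theory Defs
  imports "HOL-Analysis.Analysis"
begin

definition phi :: "'a::euclidean_space \<Rightarrow> real" where
  "phi t = sqrt (1 - (norm t)\<^sup>2)"

definition admissible :: "real \<Rightarrow> real \<Rightarrow> real \<Rightarrow> real \<Rightarrow> bool" where
  "admissible \<tau> s1 s2 s3 \<longleftrightarrow> s1 > 0 \<and> s2 > 0 \<and> s3 > 0 \<and>
     (let M = max s1 (max s2 s3) in
        s1 + s2 \<ge> s3 + \<tau> * M \<and> s1 + s3 \<ge> s2 + \<tau> * M \<and> s2 + s3 \<ge> s1 + \<tau> * M)"

text \<open>lambda_{x3}(S) for the set S of pairs (x1,x2) in the ball squared with
  r1 x1 + r2 x2 + r3 x3 = 0 and (r_j phi(x_j)) eta-admissible: Lebesgue measure of the
  projection to x1 (x2 is determined by x1).\<close>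
definition lam_good :: "real \<Rightarrow> real \<Rightarrow> real \<Rightarrow> real \<Rightarrow> 'a::euclidean_space \<Rightarrow> ennreal" where
  "lam_good \<eta> r1 r2 r3 x3 =
     emeasure lebesgue
       {x1 \<in> cball 0 1. \<exists>x2 \<in> cball 0 1. r1 *\<^sub>R x1 + r2 *\<^sub>R x2 + r3 *\<^sub>R x3 = 0 \<and>
          admissible \<eta> (r1 * phi x1) (r2 * phi x2) (r3 * phi x3)}"

end

theory Submission
  imports Defs
begin

text \<open>
  Choose \<open>\<rho> < 1\<close> so close to 1 that the shell \<open>cball 0 1 - cball 0 \<rho>\<close> has volume below
  \<open>\<epsilon>\<close>, and fix \<open>x3\<close> with \<open>norm x3 \<le> \<rho>\<close>. Let \<open>a\<close> and \<open>b\<close> be minus the cosines of the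
  angles opposite \<open>r2\<close> and \<open>r1\<close> in the triangle with sides \<open>r1, r2, r3\<close>. The collinear points
  \<open>a x3\<close>, \<open>b x3\<close>, \<open>x3\<close> satisfy the linear relation, and the triangle with sides
  \<open>r1 phi(a x3), r2 phi(b x3), r3 phi(x3)\<close> has exactly \<open>1 - |x3|\<^sup>2\<close> times the squared area
  of the triangle \<open>r1, r2, r3\<close>. As \<open>\<tau>\<close>-admissibility bounds that area from below, the new
  triangle is admissible with a margin depending only on \<open>\<tau>\<close> and \<open>\<rho>\<close>. Since \<open>phi\<close> is
  Hoelder continuous of order 1/2, half of this margin survives for all \<open>x1\<close> in a ball of
  fixed radius around \<open>a x3\<close> (with \<open>x2\<close> solved from the linear relation), and the volume
  of that ball bounds \<open>\<lambda>\<^sub>x\<^sub>3\<close> from below.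
\<close>

section \<open>Heron's product\<close>

text \<open>Sixteen times the squared area of the triangle with sides \<open>s1, s2, s3\<close> (Heron).\<close>

definition heron :: "real \<Rightarrow> real \<Rightarrow> real \<Rightarrow> real" where
  "heron s1 s2 s3 = (s1 + s2 + s3) * (s1 + s2 - s3) * (s1 - s2 + s3) * (- s1 + s2 + s3)"

lemma heron_commute:
  "heron s2 s1 s3 = heron s1 s2 s3" "heron s1 s3 s2 = heron s1 s2 s3"
  unfolding heron_def by algebra+

lemma heron_le_slack:
  assumes "0 \<le> s1" "0 \<le> s2" "0 \<le> s3" "s1 \<le> M" "s2 \<le> M" "s3 \<le> M" "0 < heron s1 s2 s3"
  shows "heron s1 s2 s3 \<le> 3 * M ^ 3 * (s1 + s2 - s3)"
proof -
  have slack_pos: "0 < s1 + s2 - s3"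
  proof (rule ccontr)
    assume "\<not> 0 < s1 + s2 - s3"
    then have "(s1 + s2 + s3) * (s1 + s2 - s3) \<le> 0" "0 \<le> (s1 - s2 + s3) * (- s1 + s2 + s3)"
      using assms by (auto intro: mult_nonneg_nonpos mult_nonneg_nonneg)
    then have "heron s1 s2 s3 \<le> 0"
      unfolding heron_def by (metis mult.assoc mult_nonpos_nonneg)
    with assms show False by simp
  qed
  have "(s1 - s2 + s3) * (- s1 + s2 + s3) = s3\<^sup>2 - (s1 - s2)\<^sup>2"
    by algebra
  also have "\<dots> \<le> M\<^sup>2"
    using power_mono[OF assms(6,3), of 2] zero_le_power2[of "s1 - s2"] by linarith
  finally have "heron s1 s2 s3 \<le> ((s1 + s2 + s3) * (s1 + s2 - s3)) * M\<^sup>2"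
    unfolding heron_def using assms slack_pos by (simp add: mult.assoc mult_left_mono)
  also have "\<dots> \<le> (3 * M * (s1 + s2 - s3)) * M\<^sup>2"
    using assms slack_pos by (intro mult_right_mono) auto
  finally show ?thesis
    by (simp add: power2_eq_square power3_eq_cube algebra_simps)
qed

lemma slack_ge_of_heron_ge:
  assumes "0 \<le> s1" "0 \<le> s2" "0 \<le> s3" "s1 \<le> M" "s2 \<le> M" "s3 \<le> M"
    and "0 < K" "K \<le> heron s1 s2 s3"
  shows "K / (3 * M ^ 3) \<le> s1 + s2 - s3" "K / (3 * M ^ 3) \<le> s1 - s2 + s3"
    "K / (3 * M ^ 3) \<le> - s1 + s2 + s3"
proof -
  have "0 < M"
  proof (rule ccontr)
    assume "\<not> 0 < M"
    with assms have "s1 = 0" "s2 = 0" "s3 = 0"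
      by linarith+
    with assms show False
      by (simp add: heron_def)
  qed
  have "K / (3 * M ^ 3) \<le> s1 + s2 - s3" if "0 \<le> s1" "0 \<le> s2" "0 \<le> s3" "s1 \<le> M" "s2 \<le> M" "s3 \<le> M"
    "K \<le> heron s1 s2 s3" for s1 s2 s3
    using heron_le_slack[OF that(1-6)] that(7) \<open>0 < K\<close> \<open>0 < M\<close>
    by (simp add: divide_le_eq mult.commute)
  from this[of s1 s2 s3] this[of s1 s3 s2] this[of s2 s3 s1] assms
  show "K / (3 * M ^ 3) \<le> s1 + s2 - s3" "K / (3 * M ^ 3) \<le> s1 - s2 + s3"
    "K / (3 * M ^ 3) \<le> - s1 + s2 + s3"
    by (simp_all add: heron_commute algebra_simps)
qed

definition heron_of_squares :: "real \<Rightarrow> real \<Rightarrow> real \<Rightarrow> real" where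
  "heron_of_squares p q r = 2 * (p * q + q * r + r * p) - p\<^sup>2 - q\<^sup>2 - r\<^sup>2"

lemma heron_eq_heron_of_squares: "heron s1 s2 s3 = heron_of_squares (s1\<^sup>2) (s2\<^sup>2) (s3\<^sup>2)"
  unfolding heron_def heron_of_squares_def by algebra

lemma heron_of_squares_shrink:
  assumes "r \<noteq> 0"
  shows "heron_of_squares (p - (q - p - r)\<^sup>2 * u / (4 * r)) (q - (p - q - r)\<^sup>2 * u / (4 * r)) (r - r * u)
    = (1 - u) * heron_of_squares p q r"
  using assms unfolding heron_of_squares_def by (simp add: field_simps power2_eq_square)

lemma heron_shrink:
  fixes r1 r2 r3 u :: real
  assumes "r1 \<noteq> 0" "r2 \<noteq> 0" "r3 \<noteq> 0" "a\<^sup>2 * u \<le> 1" "b\<^sup>2 * u \<le> 1" "u \<le> 1"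
    and a: "a = (r2\<^sup>2 - r1\<^sup>2 - r3\<^sup>2) / (2 * r1 * r3)"
    and b: "b = (r1\<^sup>2 - r2\<^sup>2 - r3\<^sup>2) / (2 * r2 * r3)"
  shows "heron (r1 * sqrt (1 - a\<^sup>2 * u)) (r2 * sqrt (1 - b\<^sup>2 * u)) (r3 * sqrt (1 - u))
    = (1 - u) * heron r1 r2 r3"
proof -
  have sq: "(r * sqrt (1 - c))\<^sup>2 = r\<^sup>2 - r\<^sup>2 * c" if "c \<le> 1" for r c :: real
    using that by (simp add: power_mult_distrib algebra_simps)
  have "(r1 * sqrt (1 - a\<^sup>2 * u))\<^sup>2 = r1\<^sup>2 - (r2\<^sup>2 - r1\<^sup>2 - r3\<^sup>2)\<^sup>2 * u / (4 * r3\<^sup>2)"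
    unfolding sq[OF assms(4)] unfolding a using assms(1,3) by (simp add: power_divide power_mult_distrib)
  moreover have "(r2 * sqrt (1 - b\<^sup>2 * u))\<^sup>2 = r2\<^sup>2 - (r1\<^sup>2 - r2\<^sup>2 - r3\<^sup>2)\<^sup>2 * u / (4 * r3\<^sup>2)"
    unfolding sq[OF assms(5)] unfolding b using assms(2,3) by (simp add: power_divide power_mult_distrib)
  ultimately show ?thesis
    unfolding heron_eq_heron_of_squares sq[OF assms(6)] using assms(3)
    by (simp add: heron_of_squares_shrink)
qed

section \<open>Admissible triples\<close>

lemma admissibleD:
  assumes "admissible \<tau> r1 r2 r3"
  defines "M \<equiv> max r1 (max r2 r3)"
  shows "0 < r1" "0 < r2" "0 < r3" "0 < M" "r1 \<le> M" "r2 \<le> M" "r3 \<le> M"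
    "\<tau> * M \<le> r1 + r2 - r3" "\<tau> * M \<le> r1 - r2 + r3" "\<tau> * M \<le> - r1 + r2 + r3"
    "\<tau> * M \<le> r1" "\<tau> * M \<le> r2" "\<tau> * M \<le> r3" "\<tau> \<le> 1"
proof -
  show pos: "0 < r1" "0 < r2" "0 < r3" and slack: "\<tau> * M \<le> r1 + r2 - r3"
    "\<tau> * M \<le> r1 - r2 + r3" "\<tau> * M \<le> - r1 + r2 + r3"
    using assms unfolding admissible_def Let_def by auto
  show "0 < M" "r1 \<le> M" "r2 \<le> M" "r3 \<le> M"
    using pos unfolding M_def by auto
  show sides: "\<tau> * M \<le> r1" "\<tau> * M \<le> r2" "\<tau> * M \<le> r3"
    using slack by linarith+
  have "M = r1 \<or> M = r2 \<or> M = r3"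
    unfolding M_def by linarith
  with sides have "\<tau> * M \<le> 1 * M"
    by auto
  with \<open>0 < M\<close> show "\<tau> \<le> 1"
    by (simp add: mult_le_cancel_right1)
qed

lemma heron_ge_admissible:
  assumes "admissible \<tau> r1 r2 r3" "0 \<le> \<tau>"
  shows "(\<tau> * max r1 (max r2 r3)) ^ 4 \<le> heron r1 r2 r3"
proof -
  define m where "m = \<tau> * max r1 (max r2 r3)"
  have m: "0 \<le> m" "m \<le> r1 + r2 + r3" "m \<le> r1 + r2 - r3" "m \<le> r1 - r2 + r3" "m \<le> - r1 + r2 + r3"
    using admissibleD[OF assms(1)] assms(2) unfolding m_def by (simp, linarith+)
  have mm: "0 \<le> m * m"
    using m(1) by simp
  have h1: "m * m \<le> (r1 + r2 + r3) * (r1 + r2 - r3)"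
    by (rule mult_mono) (use m in linarith)+
  have h2: "m * m \<le> (r1 - r2 + r3) * (- r1 + r2 + r3)"
    by (rule mult_mono) (use m in linarith)+
  have "(m * m) * (m * m) \<le> ((r1 + r2 + r3) * (r1 + r2 - r3)) * ((r1 - r2 + r3) * (- r1 + r2 + r3))"
    by (rule mult_mono[OF h1 h2]) (use mm h1 in linarith)+
  then show ?thesis
    unfolding heron_def m_def[symmetric] by (simp add: power4_eq_xxxx mult.assoc)
qed

lemma cosine_sq_le_1:
  fixes r1 r2 r3 :: real
  assumes "0 < r1" "0 < r3" "0 \<le> r2" "r2 \<le> r1 + r3" "r1 \<le> r2 + r3" "r3 \<le> r1 + r2"
  shows "((r2\<^sup>2 - r1\<^sup>2 - r3\<^sup>2) / (2 * r1 * r3))\<^sup>2 \<le> 1"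
proof -
  have "\<bar>r1 - r3\<bar> \<le> \<bar>r2\<bar>" "\<bar>r2\<bar> \<le> \<bar>r1 + r3\<bar>"
    using assms by auto
  then have "(r1 - r3)\<^sup>2 \<le> r2\<^sup>2" "r2\<^sup>2 \<le> (r1 + r3)\<^sup>2"
    by (simp_all only: abs_le_square_iff)
  then have "\<bar>r2\<^sup>2 - r1\<^sup>2 - r3\<^sup>2\<bar> \<le> \<bar>2 * r1 * r3\<bar>"
    using assms by (simp add: power2_eq_square algebra_simps abs_le_iff)
  then show ?thesis
    using assms by (simp add: abs_square_le_1 abs_divide divide_le_eq_1)
qed

lemma admissible_of_near_slack:
  assumes "\<kappa> * M \<le> s1 + s2 - s3" "\<kappa> * M \<le> s1 - s2 + s3" "\<kappa> * M \<le> - s1 + s2 + s3"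
    and "\<bar>t1 - s1\<bar> \<le> \<kappa> * M / 6" "\<bar>t2 - s2\<bar> \<le> \<kappa> * M / 6" "\<bar>t3 - s3\<bar> \<le> \<kappa> * M / 6"
    and "t1 \<le> M" "t2 \<le> M" "t3 \<le> M" "0 < M" "0 < \<kappa>" "0 < \<eta>" "\<eta> \<le> \<kappa> / 2"
  shows "admissible \<eta> t1 t2 t3"
proof -
  have "0 < \<kappa> * M"
    using assms by simp
  then have "0 < t1" "0 < t2" "0 < t3"
    using assms(1-6) unfolding abs_le_iff by linarith+
  then have "\<eta> * max t1 (max t2 t3) \<le> \<kappa> / 2 * M"
    using assms(7-13) by (intro mult_mono) auto
  with \<open>0 < t1\<close> \<open>0 < t2\<close> \<open>0 < t3\<close> show ?thesis
    unfolding admissible_def Let_def using assms(1-6) unfolding abs_le_iff by auto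
qed

section \<open>The function phi\<close>

lemma phi_nonneg: "norm x \<le> 1 \<Longrightarrow> 0 \<le> phi x"
  unfolding phi_def by (simp add: power_le_one)

lemma phi_le_1: "phi x \<le> 1"
  unfolding phi_def by simp

lemma abs_sqrt_diff_le:
  assumes "0 \<le> x" "0 \<le> y"
  shows "\<bar>sqrt x - sqrt y\<bar> \<le> sqrt \<bar>x - y\<bar>"
proof -
  have *: "sqrt x - sqrt y \<le> sqrt (x - y)" if "0 \<le> y" "y \<le> x" for x y :: real
    using sqrt_add_le_add_sqrt[of y "x - y"] that by simp
  show ?thesis
    using *[of y x] *[of x y] assms by (cases "y \<le> x") (auto simp: abs_if)
qed

lemma abs_phi_diff_le:
  assumes "norm x \<le> 1" "norm y \<le> 1"
  shows "\<bar>phi x - phi y\<bar> \<le> sqrt (2 * norm (x - y))"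
proof -
  have "\<bar>phi x - phi y\<bar> \<le> sqrt \<bar>(1 - (norm x)\<^sup>2) - (1 - (norm y)\<^sup>2)\<bar>"
    unfolding phi_def using assms by (intro abs_sqrt_diff_le) (auto simp: power_le_one)
  also have "(1 - (norm x)\<^sup>2) - (1 - (norm y)\<^sup>2) = (norm y - norm x) * (norm y + norm x)"
    by (simp add: power2_eq_square algebra_simps)
  also have "\<bar>(norm y - norm x) * (norm y + norm x)\<bar> = \<bar>norm y - norm x\<bar> * (norm y + norm x)"
    by (simp add: abs_mult)
  also have "\<dots> \<le> norm (x - y) * 2"
    using assms norm_triangle_ineq3[of y x] by (intro mult_mono) (auto simp: norm_minus_commute)
  finally show ?thesis
    by (simp add: mult.commute)
qed

lemma scaled_phi_near:
  assumes "norm x \<le> 1" "norm y \<le> 1" "0 \<le> r" "r \<le> M" "0 \<le> c" "72 * norm (x - y) \<le> c\<^sup>2"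
  shows "\<bar>r * phi x - r * phi y\<bar> \<le> c * M / 6"
proof -
  have "sqrt (2 * norm (x - y)) \<le> sqrt ((c / 6)\<^sup>2)"
    by (rule real_sqrt_le_mono) (use assms(6) in \<open>simp add: power_divide\<close>)
  then have "\<bar>phi x - phi y\<bar> \<le> sqrt ((c / 6)\<^sup>2)"
    using abs_phi_diff_le[OF assms(1,2)] by linarith
  then have "\<bar>phi x - phi y\<bar> \<le> c / 6"
    using assms(5) by simp
  then have "r * \<bar>phi x - phi y\<bar> \<le> M * (c / 6)"
    using assms(3-5) by (intro mult_mono) auto
  then show ?thesis
    using assms(3) by (simp add: abs_mult right_diff_distrib[symmetric] mult.commute)
qed

section \<open>Measurability and volume\<close>

lemma borel_measurable_phi [measurable]: "phi \<in> borel_measurable (borel :: 'a::euclidean_space measure)"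
  unfolding phi_def by measurable

lemma pred_admissible [measurable]:
  fixes f1 f2 f3 :: "'b \<Rightarrow> real"
  assumes [measurable]: "f1 \<in> borel_measurable M" "f2 \<in> borel_measurable M" "f3 \<in> borel_measurable M"
  shows "Measurable.pred M (\<lambda>x. admissible \<eta> (f1 x) (f2 x) (f3 x))"
  unfolding admissible_def Let_def by measurable

definition good_section :: "real \<Rightarrow> real \<Rightarrow> real \<Rightarrow> real \<Rightarrow> 'a::euclidean_space \<Rightarrow> 'a set" where
  "good_section \<eta> r1 r2 r3 x3 =
     {x1 \<in> cball 0 1. \<exists>x2 \<in> cball 0 1. r1 *\<^sub>R x1 + r2 *\<^sub>R x2 + r3 *\<^sub>R x3 = 0 \<and>
        admissible \<eta> (r1 * phi x1) (r2 * phi x2) (r3 * phi x3)}"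

lemma sets_good_section:
  assumes "r2 \<noteq> 0"
  shows "good_section \<eta> r1 r2 r3 x3 \<in> sets lborel"
proof -
  define g where "g x1 = (1 / r2) *\<^sub>R - (r1 *\<^sub>R x1 + r3 *\<^sub>R x3)" for x1 :: 'a
  have solve: "r1 *\<^sub>R x1 + r2 *\<^sub>R x2 + r3 *\<^sub>R x3 = 0 \<longleftrightarrow> x2 = g x1" for x1 x2
  proof
    assume "r1 *\<^sub>R x1 + r2 *\<^sub>R x2 + r3 *\<^sub>R x3 = 0"
    then have "r2 *\<^sub>R x2 = - (r1 *\<^sub>R x1 + r3 *\<^sub>R x3)"
      by (simp add: eq_neg_iff_add_eq_0 algebra_simps)
    then have "(1 / r2) *\<^sub>R (r2 *\<^sub>R x2) = g x1"
      unfolding g_def by (rule arg_cong)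
    then show "x2 = g x1"
      using assms by simp
  next
    assume "x2 = g x1"
    moreover have "r2 *\<^sub>R g x1 = - (r1 *\<^sub>R x1 + r3 *\<^sub>R x3)"
      using assms unfolding g_def by simp
    ultimately show "r1 *\<^sub>R x1 + r2 *\<^sub>R x2 + r3 *\<^sub>R x3 = 0"
      by simp
  qed
  have "good_section \<eta> r1 r2 r3 x3 = {x1 \<in> space lborel. norm x1 \<le> 1 \<and> norm (g x1) \<le> 1 \<and>
          admissible \<eta> (r1 * phi x1) (r2 * phi (g x1)) (r3 * phi x3)}"
    unfolding good_section_def solve by auto
  also have "\<dots> \<in> sets lborel"
    unfolding g_def by measurable
  finally show ?thesis .
qed

lemma lam_good_eq_emeasure_good_section:
  assumes "r2 \<noteq> 0"
  shows "lam_good \<eta> r1 r2 r3 x3 = emeasure lborel (good_section \<eta> r1 r2 r3 x3)"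
  using sets_good_section[OF assms, of \<eta> r1 r3 x3]
  unfolding lam_good_def good_section_def[symmetric] by (simp add: emeasure_completion)

lemma emeasure_annulus_less:
  assumes "0 < \<epsilon>"
  obtains \<rho> where "0 < \<rho>" "\<rho> < 1"
    "emeasure lebesgue (cball 0 1 - cball (0::'a::euclidean_space) \<rho>) < ennreal \<epsilon>"
proof -
  define V where "V = unit_ball_vol (real DIM('a))"
  have "((\<lambda>\<rho>. V * (1 - \<rho> ^ DIM('a))) \<longlongrightarrow> V * (1 - 1 ^ DIM('a))) (at_left 1)"
    by (intro tendsto_intros)
  then have "\<forall>\<^sub>F \<rho> in at_left 1. V * (1 - \<rho> ^ DIM('a)) < \<epsilon>"
    using assms by (auto dest: order_tendstoD(2))
  moreover have "\<forall>\<^sub>F \<rho> in at_left (1::real). 0 < \<rho> \<and> \<rho> < 1"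
    unfolding eventually_at_left_field by (intro exI[of _ 0]) auto
  ultimately obtain \<rho> where \<rho>: "0 < \<rho>" "\<rho> < 1" "V * (1 - \<rho> ^ DIM('a)) < \<epsilon>"
    using eventually_happens'[OF trivial_limit_at_left_real] by (metis (mono_tags, lifting) eventually_conj_iff)
  have "emeasure lebesgue (cball 0 1 - cball (0::'a) \<rho>)
      = emeasure lborel (cball (0::'a) 1) - emeasure lborel (cball (0::'a) \<rho>)"
    using \<rho> by (subst emeasure_Diff) (auto simp: emeasure_cball emeasure_completion)
  also have "\<dots> = ennreal (V * (1 - \<rho> ^ DIM('a)))"
    using \<rho> by (simp add: emeasure_cball V_def ennreal_minus[symmetric] algebra_simps power_le_one)
  also have "\<dots> < ennreal \<epsilon>"
    using \<rho>(3) assms by (simp add: ennreal_lessI)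
  finally show ?thesis
    using that \<rho> by blast
qed

section \<open>The good set contains a ball\<close>

lemma central_point:
  fixes x3 :: "'a::euclidean_space"
  assumes adm: "admissible \<tau> r1 r2 r3" and "0 < \<tau>" "0 < \<rho>" "\<rho> < 1" "norm x3 \<le> \<rho>"
  defines "M \<equiv> max r1 (max r2 r3)" and "\<kappa> \<equiv> (1 - \<rho>\<^sup>2) * \<tau> ^ 4 / 3"
    and "a \<equiv> (r2\<^sup>2 - r1\<^sup>2 - r3\<^sup>2) / (2 * r1 * r3)" and "b \<equiv> (r1\<^sup>2 - r2\<^sup>2 - r3\<^sup>2) / (2 * r2 * r3)"
  defines "t1 \<equiv> r1 * phi (a *\<^sub>R x3)" and "t2 \<equiv> r2 * phi (b *\<^sub>R x3)" and "t3 \<equiv> r3 * phi x3"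
  shows "r1 *\<^sub>R (a *\<^sub>R x3) + r2 *\<^sub>R (b *\<^sub>R x3) + r3 *\<^sub>R x3 = 0"
    "norm (a *\<^sub>R x3) \<le> \<rho>" "norm (b *\<^sub>R x3) \<le> \<rho>"
    "\<kappa> * M \<le> t1 + t2 - t3" "\<kappa> * M \<le> t1 - t2 + t3" "\<kappa> * M \<le> - t1 + t2 + t3"
proof -
  note B = admissibleD[OF adm, folded M_def]
  have "r1 * a + r2 * b + r3 = 0"
    unfolding a_def b_def using B(1-3) by (simp add: field_simps power2_eq_square)
  then show "r1 *\<^sub>R (a *\<^sub>R x3) + r2 *\<^sub>R (b *\<^sub>R x3) + r3 *\<^sub>R x3 = 0"
    by (metis scaleR_left_distrib scaleR_scaleR scaleR_zero_left)
  have "0 \<le> \<tau> * M"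
    using B(4) \<open>0 < \<tau>\<close> by simp
  then have a: "a\<^sup>2 \<le> 1" and b: "b\<^sup>2 \<le> 1"
    unfolding a_def b_def using B(1-3,8-10) by (intro cosine_sq_le_1; linarith)+
  then have "\<bar>a\<bar> \<le> 1" "\<bar>b\<bar> \<le> 1"
    by (simp_all add: abs_square_le_1)
  then show "norm (a *\<^sub>R x3) \<le> \<rho>" "norm (b *\<^sub>R x3) \<le> \<rho>"
    using mult_right_mono[of "\<bar>a\<bar>" 1 "norm x3"] mult_right_mono[of "\<bar>b\<bar>" 1 "norm x3"]
      \<open>norm x3 \<le> \<rho>\<close>
    by simp_all
  define u where "u = (norm x3)\<^sup>2"
  have u: "0 \<le> u" "u \<le> \<rho>\<^sup>2" "\<rho>\<^sup>2 < 1"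
    unfolding u_def using assms(3-5) by (auto intro: power_mono simp: power_less_one_iff)
  have au: "a\<^sup>2 * u \<le> 1" and bu: "b\<^sup>2 * u \<le> 1"
    using a b u by (auto intro: mult_le_one)
  have t: "t1 = r1 * sqrt (1 - a\<^sup>2 * u)" "t2 = r2 * sqrt (1 - b\<^sup>2 * u)" "t3 = r3 * sqrt (1 - u)"
    unfolding t1_def t2_def t3_def phi_def u_def by (simp_all add: power_mult_distrib)
  have "heron t1 t2 t3 = (1 - u) * heron r1 r2 r3"
    unfolding t using B(1-3) au bu u(2,3) a_def b_def by (intro heron_shrink) simp_all
  moreover have "(\<tau> * M) ^ 4 \<le> heron r1 r2 r3"
    unfolding M_def using adm \<open>0 < \<tau>\<close> by (intro heron_ge_admissible) auto
  ultimately have K: "(1 - \<rho>\<^sup>2) * (\<tau> * M) ^ 4 \<le> heron t1 t2 t3"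
    using u by (simp add: mult_mono)
  have K0: "0 < (1 - \<rho>\<^sup>2) * (\<tau> * M) ^ 4"
    using u B(4) \<open>0 < \<tau>\<close> by simp
  have n: "norm (a *\<^sub>R x3) \<le> 1" "norm (b *\<^sub>R x3) \<le> 1" "norm x3 \<le> 1"
    using \<open>norm (a *\<^sub>R x3) \<le> \<rho>\<close> \<open>norm (b *\<^sub>R x3) \<le> \<rho>\<close> assms(4,5) by linarith+
  have t_nonneg: "0 \<le> t1" "0 \<le> t2" "0 \<le> t3"
    unfolding t1_def t2_def t3_def using B(1-3) phi_nonneg[OF n(1)] phi_nonneg[OF n(2)]
      phi_nonneg[OF n(3)]
    by simp_all
  have t_le: "t1 \<le> M" "t2 \<le> M" "t3 \<le> M"
    unfolding t1_def t2_def t3_def using B(1-3,5-7) mult_left_le[OF phi_le_1]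
    by (meson less_imp_le order_trans)+
  note slack = slack_ge_of_heron_ge[OF t_nonneg t_le K0 K]
  have "(1 - \<rho>\<^sup>2) * (\<tau> * M) ^ 4 / (3 * M ^ 3) = \<kappa> * M"
    unfolding \<kappa>_def using B(4) by (simp add: field_simps power_mult_distrib power4_eq_xxxx power3_eq_cube)
  with slack show "\<kappa> * M \<le> t1 + t2 - t3" "\<kappa> * M \<le> t1 - t2 + t3" "\<kappa> * M \<le> - t1 + t2 + t3"
    by simp_all
qed

lemma good_section_contains_ball:
  fixes x3 :: "'a::euclidean_space"
  assumes adm: "admissible \<tau> r1 r2 r3" and "0 < \<tau>" "0 < \<rho>" "\<rho> < 1" "norm x3 \<le> \<rho>"
  defines "\<kappa> \<equiv> (1 - \<rho>\<^sup>2) * \<tau> ^ 4 / 3"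
  assumes "0 < \<eta>" "\<eta> \<le> \<kappa> / 2" "0 < \<delta>" "\<delta> \<le> \<tau> * (1 - \<rho>)" "\<delta> \<le> \<tau> * (\<kappa>\<^sup>2 / 72)"
  obtains p where "ball p \<delta> \<subseteq> good_section \<eta> r1 r2 r3 x3"
proof -
  define M where "M = max r1 (max r2 r3)"
  define p where "p = ((r2\<^sup>2 - r1\<^sup>2 - r3\<^sup>2) / (2 * r1 * r3)) *\<^sub>R x3"
  define q where "q = ((r1\<^sup>2 - r2\<^sup>2 - r3\<^sup>2) / (2 * r2 * r3)) *\<^sub>R x3"
  note B = admissibleD[OF adm, folded M_def]
  note C = central_point[OF adm assms(2-5), folded M_def \<kappa>_def p_def q_def]
  have "0 < \<kappa>"
    unfolding \<kappa>_def using assms(2-4) by (simp add: power_less_one_iff)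
  have \<delta>: "\<delta> \<le> \<delta> / \<tau>" "\<delta> / \<tau> \<le> 1 - \<rho>" "72 * (\<delta> / \<tau>) \<le> \<kappa>\<^sup>2"
    using assms(2,9-11) B(14) by (simp_all add: field_simps)
  have "\<tau> * r1 \<le> r2"
    using B(5,12) \<open>0 < \<tau>\<close> by (meson mult_left_mono less_imp_le order_trans)
  then have ratio: "r1 / r2 \<le> 1 / \<tau>"
    using B(2) \<open>0 < \<tau>\<close> by (simp add: field_simps)
  have "ball p \<delta> \<subseteq> good_section \<eta> r1 r2 r3 x3"
  proof
    fix x1 assume "x1 \<in> ball p \<delta>"
    then have "norm (x1 - p) < \<delta>"
      by (simp add: dist_norm norm_minus_commute)
    then have d1: "norm (x1 - p) \<le> \<delta> / \<tau>"
      using \<delta>(1) by simp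
    define x2 where "x2 = q - (r1 / r2) *\<^sub>R (x1 - p)"
    have "norm (x2 - q) = r1 / r2 * norm (x1 - p)"
      unfolding x2_def using B(1,2) by simp
    also have "\<dots> \<le> 1 / \<tau> * \<delta>"
      using ratio \<open>norm (x1 - p) < \<delta>\<close> B(1,2) \<open>0 < \<tau>\<close> by (intro mult_mono) auto
    finally have d2: "norm (x2 - q) \<le> \<delta> / \<tau>"
      by simp
    have n1: "norm x1 \<le> 1"
      using norm_triangle_sub[of x1 p] C(2) d1 \<delta>(2) by simp
    have n2: "norm x2 \<le> 1"
      using norm_triangle_sub[of x2 q] C(3) d2 \<delta>(2) by simp
    have "r1 *\<^sub>R x1 + r2 *\<^sub>R x2 + r3 *\<^sub>R x3 = r1 *\<^sub>R p + r2 *\<^sub>R q + r3 *\<^sub>R x3"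
      unfolding x2_def using B(2) by (simp add: algebra_simps)
    with C(1) have lin: "r1 *\<^sub>R x1 + r2 *\<^sub>R x2 + r3 *\<^sub>R x3 = 0"
      by simp
    have "\<bar>r1 * phi x1 - r1 * phi p\<bar> \<le> \<kappa> * M / 6"
      using n1 C(2) assms(4) B(1,5) \<open>0 < \<kappa>\<close> d1 \<delta>(3) by (intro scaled_phi_near) auto
    moreover have "\<bar>r2 * phi x2 - r2 * phi q\<bar> \<le> \<kappa> * M / 6"
      using n2 C(3) assms(4) B(2,6) \<open>0 < \<kappa>\<close> d2 \<delta>(3) by (intro scaled_phi_near) auto
    moreover have "r1 * phi x1 \<le> M" "r2 * phi x2 \<le> M" "r3 * phi x3 \<le> M"
      using B(1-3,5-7) mult_left_le[OF phi_le_1] by (meson less_imp_le order_trans)+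
    ultimately have "admissible \<eta> (r1 * phi x1) (r2 * phi x2) (r3 * phi x3)"
      using C(4-6) B(4) \<open>0 < \<kappa>\<close> assms(7,8) by (intro admissible_of_near_slack) auto
    with n1 n2 lin show "x1 \<in> good_section \<eta> r1 r2 r3 x3"
      unfolding good_section_def by auto
  qed
  then show thesis
    by (rule that)
qed

lemma lam_good_uniform_lower_bound:
  assumes "0 < \<tau>" "0 < \<rho>" "\<rho> < 1"
  obtains \<eta> where "0 < \<eta>"
    "\<And>r1 r2 r3 (x3::'a::euclidean_space). admissible \<tau> r1 r2 r3 \<Longrightarrow> norm x3 \<le> \<rho> \<Longrightarrow>
      ennreal \<eta> \<le> lam_good \<eta> r1 r2 r3 x3"
proof -
  define \<kappa> where "\<kappa> = (1 - \<rho>\<^sup>2) * \<tau> ^ 4 / 3"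
  text \<open>\<open>\<delta>\<close> keeps the ball inside the unit ball and the Hoelder error of \<open>phi\<close> below \<open>\<kappa> M / 6\<close>.\<close>
  define \<delta> where "\<delta> = \<tau> * min (1 - \<rho>) (\<kappa>\<^sup>2 / 72)"
  define \<eta> where "\<eta> = min (\<kappa> / 2) (unit_ball_vol DIM('a) * \<delta> ^ DIM('a))"
  have "0 < \<kappa>"
    unfolding \<kappa>_def using assms by (simp add: power_less_one_iff)
  have \<delta>: "0 < \<delta>" "\<delta> \<le> \<tau> * (1 - \<rho>)" "\<delta> \<le> \<tau> * (\<kappa>\<^sup>2 / 72)"
    unfolding \<delta>_def using \<open>0 < \<kappa>\<close> assms
    by (simp, (intro mult_left_mono min.cobounded1 min.cobounded2; simp)+)
  have \<eta>: "0 < \<eta>" "\<eta> \<le> \<kappa> / 2"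
    unfolding \<eta>_def using \<open>0 < \<kappa>\<close> \<delta>(1) by simp_all
  have "ennreal \<eta> \<le> lam_good \<eta> r1 r2 r3 x3"
    if adm: "admissible \<tau> r1 r2 r3" and x3: "norm x3 \<le> \<rho>" for r1 r2 r3 and x3 :: 'a
  proof -
    have r2: "r2 \<noteq> 0"
      using admissibleD(2)[OF adm] by simp
    obtain p where p: "ball p \<delta> \<subseteq> good_section \<eta> r1 r2 r3 x3"
      using good_section_contains_ball[of \<tau> r1 r2 r3 \<rho> x3 \<eta> \<delta>, folded \<kappa>_def,
          OF adm assms x3 \<eta> \<delta>] .
    have "ennreal \<eta> \<le> emeasure lborel (ball p \<delta>)"
      using \<delta>(1) by (simp add: emeasure_ball \<eta>_def)
    also have "\<dots> \<le> emeasure lborel (good_section \<eta> r1 r2 r3 x3)"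
      by (rule emeasure_mono[OF p sets_good_section[OF r2]])
    also have "\<dots> = lam_good \<eta> r1 r2 r3 x3"
      by (rule lam_good_eq_emeasure_good_section[OF r2, symmetric])
    finally show ?thesis .
  qed
  with \<eta>(1) show thesis
    by (rule that)
qed

theorem lemma3p2:
  fixes \<tau> \<epsilon> :: real
  assumes "\<tau> > 0" and "\<epsilon> > 0"
  shows "\<exists>\<eta>>0. \<forall>r1 r2 r3. admissible \<tau> r1 r2 r3 \<longrightarrow>
           (\<exists>G B. G \<in> sets lebesgue \<and> B \<in> sets lebesgue \<and>
              G \<union> B = cball (0::'a::euclidean_space) 1 \<and> G \<inter> B = {} \<and>
              emeasure lebesgue B < ennreal \<epsilon> \<and>
              (\<forall>x3\<in>G. lam_good \<eta> r1 r2 r3 x3 \<ge> ennreal \<eta>))"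
proof -
  obtain \<rho> where \<rho>: "0 < \<rho>" "\<rho> < 1"
    and small: "emeasure lebesgue (cball 0 1 - cball (0::'a) \<rho>) < ennreal \<epsilon>"
    using emeasure_annulus_less[OF assms(2)] .
  obtain \<eta> where "0 < \<eta>" and good:
    "\<And>r1 r2 r3 (x3::'a). admissible \<tau> r1 r2 r3 \<Longrightarrow> norm x3 \<le> \<rho> \<Longrightarrow>
      ennreal \<eta> \<le> lam_good \<eta> r1 r2 r3 x3"
    using lam_good_uniform_lower_bound[OF assms(1) \<rho>] by blast
  have "cball 0 \<rho> \<subseteq> cball (0::'a) 1"
    using \<rho>(2) by (simp add: subset_cball)
  with \<open>0 < \<eta>\<close> good small show ?thesis
    by (intro exI[of _ \<eta>] conjI allI impI exI[of _ "cball 0 \<rho>", OF exI[of _ "cball 0 1 - cball 0 \<rho>"]]) auto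
qed

end
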